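(* Let $X=\mathcal{P}(\omega)$ equipped with the subset relation, let $\Gamma$ be the group of all automorphisms of $\langle X,\subseteq\rangle$ acting by application, and let $I$ be the ideal of finite subsets of $X$. Then $\Gamma\curvearrowright X, I$ is almost simple but not simple.
   Context: For a group $\Gamma$ acting on $X$ and $a\subseteq X$, $\mathrm{pstab}(a)=\{\gamma\in\Gamma:\gamma\cdot x=x\ \forall x\in a\}$. A dynamical ideal $\Gamma\curvearrowright X, I$ (a $\Gamma$-invariant ideal containing all singletons) is simple if for all $a\subseteq b$ in $I$, the only normal subgroup of $\mathrm{pstab}(a)$ containing $\mathrm{pstab}(b)$ is $\mathrm{pstab}(a)$ itself; it is almost simple if every set in $I$ has a superset $a\in I$ such that for every $b\in I$ with $a\subseteq b$, the only normal subgroup of $\mathrm{pstab}(a)$ containing $\mathrm{pstab}(b)$ is $\mathrm{pstab}(a)$. *)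

theory Defs
  imports "HOL-Algebra.Group" "HOL-Algebra.Coset"
begin

definition perm_group :: "('a \<Rightarrow> 'a) set \<Rightarrow> ('a \<Rightarrow> 'a) monoid" where
  "perm_group S = \<lparr>carrier = S, mult = (\<circ>), one = id\<rparr>"

definition pstab :: "('a \<Rightarrow> 'a) set \<Rightarrow> 'a set \<Rightarrow> ('a \<Rightarrow> 'a) set" where
  "pstab \<Gamma> a = {g \<in> \<Gamma>. \<forall>x \<in> a. g x = x}"

definition dynamical_ideal :: "('a \<Rightarrow> 'a) set \<Rightarrow> 'a set set \<Rightarrow> bool" where
  "dynamical_ideal \<Gamma> I \<longleftrightarrow>
     (\<forall>a \<in> I. \<forall>b. b \<subseteq> a \<longrightarrow> b \<in> I) \<and>
     (\<forall>a \<in> I. \<forall>b \<in> I. a \<union> b \<in> I) \<and>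
     (\<forall>x. {x} \<in> I) \<and>
     (\<forall>g \<in> \<Gamma>. \<forall>a \<in> I. g ` a \<in> I)"

definition stab_simple_pair :: "('a \<Rightarrow> 'a) set \<Rightarrow> 'a set \<Rightarrow> 'a set \<Rightarrow> bool" where
  "stab_simple_pair \<Gamma> a b \<longleftrightarrow>
     (\<forall>N. N \<lhd> perm_group (pstab \<Gamma> a) \<and> pstab \<Gamma> b \<subseteq> N \<longrightarrow> N = pstab \<Gamma> a)"

definition simple_dyn :: "('a \<Rightarrow> 'a) set \<Rightarrow> 'a set set \<Rightarrow> bool" where
  "simple_dyn \<Gamma> I \<longleftrightarrow> (\<forall>a \<in> I. \<forall>b \<in> I. a \<subseteq> b \<longrightarrow> stab_simple_pair \<Gamma> a b)"

definition almost_simple_dyn :: "('a \<Rightarrow> 'a) set \<Rightarrow> 'a set set \<Rightarrow> bool" where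
  "almost_simple_dyn \<Gamma> I \<longleftrightarrow>
     (\<forall>c \<in> I. \<exists>a \<in> I. c \<subseteq> a \<and> (\<forall>b \<in> I. a \<subseteq> b \<longrightarrow> stab_simple_pair \<Gamma> a b))"

definition subset_auts :: "(nat set \<Rightarrow> nat set) set" where
  "subset_auts = {f. bij f \<and> (\<forall>A B. A \<subseteq> B \<longleftrightarrow> f A \<subseteq> f B)}"

end

theory Submission
  imports Defs "HOL-Combinatorics.Permutations" "HOL-Library.Infinite_Set"
begin

text \<open>Every automorphism of \<open>(P(\<omega>), \<subseteq>)\<close> is induced by a permutation of \<open>\<omega>\<close>, so for finite
  \<open>a\<close> the group \<open>pstab(a)\<close> consists of the permutations preserving every atom of the Boolean
  algebra generated by \<open>a\<close>: it is the product of the symmetric groups of these atoms.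
  Suppose every atom of \<open>a\<close> is a singleton or infinite; this is arranged by adding the finitely
  many points lying in finite atoms as singletons. Let \<open>b \<supseteq> a\<close> be finite and \<open>N\<close> normal in
  \<open>pstab(a)\<close> with \<open>pstab(b) \<subseteq> N\<close>. Each infinite atom \<open>P\<close> of \<open>a\<close> contains an infinite atom
  \<open>Q\<close> of \<open>b\<close>, so \<open>N\<close> contains \<open>Sym(Q)\<close> and hence its normal closure in \<open>Sym(P)\<close>, which is
  all of \<open>Sym(P)\<close>: every permutation of \<open>P\<close> is a product of two permutations with infinitely
  many fixed points in \<open>P\<close>, and each of these is conjugate in \<open>Sym(P)\<close> to a permutation of \<open>Q\<close>.
  Simplicity fails for \<open>a = {{0,1}}\<close> and \<open>b = {{0,1},{0},{1}}\<close>: then \<open>pstab(b)\<close> is a proper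
  normal subgroup of \<open>pstab(a)\<close>, as \<open>pstab(a)\<close> can only swap \<open>{0}\<close> and \<open>{1}\<close>.\<close>

unbundle no m_inv_syntax \<comment> \<open>\<open>inv\<close> is the inverse function; group inverses are written \<open>m_inv G\<close>\<close>

section \<open>Automorphisms of the subset order\<close>

lemma order_iso_Pow_is_image:
  fixes f :: "'a set \<Rightarrow> 'b set"
  assumes "bij f" and order: "\<And>A B. A \<subseteq> B \<longleftrightarrow> f A \<subseteq> f B"
  shows "\<exists>\<sigma>. bij \<sigma> \<and> f = image \<sigma>"
proof -
  have preimage: "\<exists>Z. f Z = Y" for Y
    using \<open>bij f\<close> by (metis bij_pointE)
  have f_empty: "f {} = {}"
    using preimage[of "{}"] order by blast
  have "\<exists>y. f {x} = {y}" for x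
  proof -
    have "f {x} \<noteq> {}"
      using f_empty \<open>bij f\<close> by (metis bij_is_inj injD insert_not_empty)
    then obtain y where y: "y \<in> f {x}" by blast
    obtain Z where Z: "f Z = {y}" using preimage by blast
    have "Z \<subseteq> {x}" using order[of Z "{x}"] Z y by auto
    moreover have "Z \<noteq> {}" using Z f_empty by auto
    ultimately show ?thesis using Z by (metis subset_singletonD)
  qed
  then obtain \<sigma> where \<sigma>: "\<And>x. f {x} = {\<sigma> x}" by metis
  have f_eq: "f A = \<sigma> ` A" for A
  proof
    show "\<sigma> ` A \<subseteq> f A"
    proof
      fix y assume "y \<in> \<sigma> ` A"
      then obtain x where "x \<in> A" "y = \<sigma> x" by blast
      then show "y \<in> f A" using order[of "{x}" A] \<sigma>[of x] by auto
    qed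
    show "f A \<subseteq> \<sigma> ` A"
    proof
      fix y assume "y \<in> f A"
      obtain Z where Z: "f Z = {y}" using preimage by blast
      then obtain x where "x \<in> Z" using f_empty by fastforce
      then have "\<sigma> x = y" using order[of "{x}" Z] Z \<sigma> by auto
      moreover have "Z \<subseteq> A" using order[of Z A] Z \<open>y \<in> f A\<close> by auto
      ultimately show "y \<in> \<sigma> ` A" using \<open>x \<in> Z\<close> by blast
    qed
  qed
  then have "f = image \<sigma>" by blast
  moreover have "bij \<sigma>"
  proof (rule bijI)
    show "inj \<sigma>"
    proof (rule injI)
      fix x y assume "\<sigma> x = \<sigma> y"
      then have "f {x} = f {y}" using \<sigma> by simp
      then show "x = y" using \<open>bij f\<close> by (auto dest: bij_is_inj injD)
    qed
    show "surj \<sigma>"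
    proof (rule surjI[of _ "\<lambda>y. SOME x. \<sigma> x = y"], rule someI_ex)
      fix y
      obtain Z where "f Z = {y}" using preimage by blast
      then have "y \<in> \<sigma> ` Z" using f_eq[of Z] by simp
      then show "\<exists>x. \<sigma> x = y" by blast
    qed
  qed
  ultimately show ?thesis by blast
qed

lemma subset_auts_iff: "f \<in> subset_auts \<longleftrightarrow> (\<exists>\<sigma>. bij \<sigma> \<and> f = image \<sigma>)"
proof
  assume "f \<in> subset_auts"
  then show "\<exists>\<sigma>. bij \<sigma> \<and> f = image \<sigma>"
    by (intro order_iso_Pow_is_image) (auto simp: subset_auts_def)
next
  assume "\<exists>\<sigma>. bij \<sigma> \<and> f = image \<sigma>"
  then obtain \<sigma> where "bij \<sigma>" "f = image \<sigma>" by blast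
  then show "f \<in> subset_auts"
    using bij_betw_Pow[of \<sigma> UNIV UNIV]
    by (auto simp: subset_auts_def bij_is_inj inj_image_subset_iff)
qed

lemma image_comp_fun: "image (f \<circ> g) = image f \<circ> image g"
  by (simp add: fun_eq_iff image_comp)

lemma image_inv_eq_inv_image:
  assumes "bij \<sigma>"
  shows "image (inv \<sigma>) = inv (image \<sigma>)"
proof (rule inv_unique_comp[symmetric])
  have "\<sigma> \<circ> inv \<sigma> = id" "inv \<sigma> \<circ> \<sigma> = id"
    using surj_iff[THEN iffD1, OF bij_is_surj] inj_iff[THEN iffD1, OF bij_is_inj] assms by auto
  then show "image \<sigma> \<circ> image (inv \<sigma>) = id" "image (inv \<sigma>) \<circ> image \<sigma> = id"
    by (simp_all add: fun_eq_iff image_comp)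
qed

definition group_of_bijections :: "('a \<Rightarrow> 'a) set \<Rightarrow> bool" where
  "group_of_bijections S \<longleftrightarrow>
     (\<forall>f\<in>S. bij f) \<and> id \<in> S \<and> (\<forall>f\<in>S. \<forall>g\<in>S. f \<circ> g \<in> S) \<and> (\<forall>f\<in>S. inv f \<in> S)"

lemma group_of_bijections_subset_auts: "group_of_bijections subset_auts"
  unfolding group_of_bijections_def
proof (intro conjI ballI)
  fix f assume "f \<in> subset_auts"
  then show "bij f" by (simp add: subset_auts_def)
  obtain \<sigma> where \<sigma>: "bij \<sigma>" "f = image \<sigma>" using \<open>f \<in> subset_auts\<close> subset_auts_iff by blast
  show "inv f \<in> subset_auts"
    using \<sigma> bij_imp_bij_inv image_inv_eq_inv_image subset_auts_iff by metis
  fix g assume "g \<in> subset_auts"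
  then obtain \<tau> where \<tau>: "bij \<tau>" "g = image \<tau>" by (auto simp: subset_auts_iff)
  have "f \<circ> g = image (\<sigma> \<circ> \<tau>)" using \<sigma> \<tau> by (simp add: fun_eq_iff image_comp)
  then show "f \<circ> g \<in> subset_auts"
    using \<sigma> \<tau> bij_comp subset_auts_iff by metis
next
  show "id \<in> subset_auts" using bij_id image_id subset_auts_iff by metis
qed

lemma group_of_bijections_pstab:
  assumes "group_of_bijections \<Gamma>"
  shows "group_of_bijections (pstab \<Gamma> a)"
  using assms unfolding group_of_bijections_def pstab_def
  by (auto simp: bij_is_inj inv_f_eq)

lemma perm_group_simps [simp]:
  "carrier (perm_group S) = S" "f \<otimes>\<^bsub>perm_group S\<^esub> g = f \<circ> g" "\<one>\<^bsub>perm_group S\<^esub> = id"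
  by (simp_all add: perm_group_def)

lemma group_perm_group:
  assumes "group_of_bijections S"
  shows "group (perm_group S)"
proof (rule groupI)
  fix f assume "f \<in> carrier (perm_group S)"
  with assms show "\<exists>g\<in>carrier (perm_group S). g \<otimes>\<^bsub>perm_group S\<^esub> f = \<one>\<^bsub>perm_group S\<^esub>"
    by (auto simp: perm_group_def group_of_bijections_def bij_is_inj intro!: bexI[of _ "inv f"])
qed (use assms in \<open>auto simp: perm_group_def group_of_bijections_def\<close>)

lemma m_inv_perm_group:
  assumes "group_of_bijections S" and "f \<in> S"
  shows "m_inv (perm_group S) f = inv f"
  using assms
  by (intro group.inv_equality[OF group_perm_group])
     (auto simp: perm_group_def group_of_bijections_def bij_is_inj)

lemma normal_perm_group_iff:
  assumes S: "group_of_bijections S"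
  shows "N \<lhd> perm_group S \<longleftrightarrow>
           N \<subseteq> S \<and> id \<in> N \<and> (\<forall>f\<in>N. \<forall>g\<in>N. f \<circ> g \<in> N) \<and> (\<forall>f\<in>N. inv f \<in> N) \<and>
           (\<forall>g\<in>S. \<forall>f\<in>N. g \<circ> f \<circ> inv g \<in> N)"
proof -
  have sub_iff: "subgroup N (perm_group S) \<longleftrightarrow>
          N \<subseteq> S \<and> id \<in> N \<and> (\<forall>f\<in>N. \<forall>g\<in>N. f \<circ> g \<in> N) \<and> (\<forall>f\<in>N. inv f \<in> N)"
    using m_inv_perm_group[OF S] by (auto simp: subgroup_def subset_iff)
  moreover have conj_iff: "subgroup N (perm_group S) \<Longrightarrow>
      (\<forall>g\<in>carrier (perm_group S). \<forall>f\<in>N. g \<otimes>\<^bsub>perm_group S\<^esub> f \<otimes>\<^bsub>perm_group S\<^esub> m_inv (perm_group S) g \<in> N)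
      \<longleftrightarrow> (\<forall>g\<in>S. \<forall>f\<in>N. g \<circ> f \<circ> inv g \<in> N)"
    using m_inv_perm_group[OF S] by (simp add: subgroup_def)
  ultimately show ?thesis
    unfolding group.normal_inv_iff[OF group_perm_group[OF S]] by argo
qed

lemma pstab_normal_in_pstab:
  assumes \<Gamma>: "group_of_bijections \<Gamma>" and "a \<subseteq> b"
    and invariant: "\<And>g. g \<in> pstab \<Gamma> a \<Longrightarrow> g ` b \<subseteq> b"
  shows "pstab \<Gamma> b \<lhd> perm_group (pstab \<Gamma> a)"
proof -
  have conj: "g \<circ> f \<circ> inv g \<in> pstab \<Gamma> b" if g: "g \<in> pstab \<Gamma> a" and f: "f \<in> pstab \<Gamma> b" for f g
  proof -
    have "inv g \<in> pstab \<Gamma> a" and "bij g"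
      using g group_of_bijections_pstab[OF \<Gamma>] by (auto simp: group_of_bijections_def)
    have "f (inv g x) = inv g x" if "x \<in> b" for x
    proof -
      have "inv g x \<in> b" using invariant[OF \<open>inv g \<in> pstab \<Gamma> a\<close>] that by blast
      then show ?thesis using f by (simp add: pstab_def)
    qed
    then have "(g \<circ> f \<circ> inv g) x = x" if "x \<in> b" for x
      using that surj_f_inv_f[OF bij_is_surj[OF \<open>bij g\<close>]] by simp
    moreover have "g \<circ> f \<circ> inv g \<in> \<Gamma>"
      using \<Gamma> g f \<open>inv g \<in> pstab \<Gamma> a\<close> by (simp add: group_of_bijections_def pstab_def)
    ultimately show ?thesis by (simp add: pstab_def)
  qed
  have "pstab \<Gamma> b \<subseteq> pstab \<Gamma> a" using \<open>a \<subseteq> b\<close> by (auto simp: pstab_def)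
  moreover have "group_of_bijections (pstab \<Gamma> b)" by (rule group_of_bijections_pstab[OF \<Gamma>])
  ultimately show ?thesis
    unfolding normal_perm_group_iff[OF group_of_bijections_pstab[OF \<Gamma>]] group_of_bijections_def
    using conj by simp
qed

section \<open>Pointwise stabilisers of families of sets\<close>

definition sets_containing :: "'a set set \<Rightarrow> 'a \<Rightarrow> 'a set set" where
  "sets_containing a x = {A \<in> a. x \<in> A}"

lemma sets_containing_subset: "sets_containing a x \<subseteq> a"
  by (auto simp: sets_containing_def)

lemma bij_image_eq_iff:
  assumes "bij \<sigma>"
  shows "\<sigma> ` A = A \<longleftrightarrow> (\<forall>x. \<sigma> x \<in> A \<longleftrightarrow> x \<in> A)"
proof
  assume "\<sigma> ` A = A"
  then show "\<forall>x. \<sigma> x \<in> A \<longleftrightarrow> x \<in> A"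
    using inj_image_mem_iff[OF bij_is_inj[OF assms]] by metis
next
  assume A: "\<forall>x. \<sigma> x \<in> A \<longleftrightarrow> x \<in> A"
  show "\<sigma> ` A = A"
    unfolding set_eq_iff
  proof
    fix y
    obtain x where "y = \<sigma> x" using assms by (metis bij_pointE)
    then show "y \<in> \<sigma> ` A \<longleftrightarrow> y \<in> A"
      using A inj_image_mem_iff[OF bij_is_inj[OF assms]] by simp
  qed
qed

lemma bij_fixes_sets_iff:
  assumes "bij \<sigma>"
  shows "(\<forall>A\<in>a. \<sigma> ` A = A) \<longleftrightarrow> (\<forall>x. sets_containing a (\<sigma> x) = sets_containing a x)"
proof -
  have "(\<forall>A\<in>a. \<sigma> ` A = A) \<longleftrightarrow> (\<forall>A\<in>a. \<forall>x. \<sigma> x \<in> A \<longleftrightarrow> x \<in> A)"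
    using bij_image_eq_iff[OF assms] by simp
  also have "\<dots> \<longleftrightarrow> (\<forall>x. sets_containing a (\<sigma> x) = sets_containing a x)"
    unfolding sets_containing_def by blast
  finally show ?thesis .
qed

lemma image_in_pstab_subset_auts_iff:
  assumes "bij \<sigma>"
  shows "image \<sigma> \<in> pstab subset_auts a \<longleftrightarrow> (\<forall>x. sets_containing a (\<sigma> x) = sets_containing a x)"
proof -
  have "image \<sigma> \<in> subset_auts" using assms subset_auts_iff by blast
  then show ?thesis unfolding pstab_def bij_fixes_sets_iff[OF assms, symmetric] by simp
qed

lemma pstab_subset_auts_eq:
  "pstab subset_auts a =
     {image \<sigma> | \<sigma>. bij \<sigma> \<and> (\<forall>x. sets_containing a (\<sigma> x) = sets_containing a x)}"
proof -
  have "\<exists>\<sigma>. bij \<sigma> \<and> f = image \<sigma>" if "f \<in> pstab subset_auts a" for f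
    using that subset_auts_iff by (simp add: pstab_def)
  then show ?thesis using image_in_pstab_subset_auts_iff by blast
qed

section \<open>Failure of simplicity\<close>

lemma not_simple_dyn_finite_sets: "\<not> simple_dyn subset_auts {a :: nat set set. finite a}"
proof -
  define a :: "nat set set" where "a = {{0, 1}}"
  define b :: "nat set set" where "b = {{0, 1}, {0}, {1}}"
  have "a \<subseteq> b" by (simp add: a_def b_def)
  have "pstab subset_auts b \<lhd> perm_group (pstab subset_auts a)"
  proof (rule pstab_normal_in_pstab[OF group_of_bijections_subset_auts \<open>a \<subseteq> b\<close>])
    fix g assume "g \<in> pstab subset_auts a"
    then obtain \<sigma> where g: "g = image \<sigma>" and \<sigma>: "\<sigma> ` {0, 1} = {0, 1}"
      using subset_auts_iff[of g] by (auto simp: pstab_def a_def)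
    have "\<sigma> 0 \<in> {0, 1}" "\<sigma> 1 \<in> {0, 1}"
      using \<sigma> by (metis imageI insertCI)+
    then have "g {0} \<in> b" "g {1} \<in> b"
      using g by (auto simp: b_def)
    moreover have "g {0, 1} \<in> b" using g \<sigma> by (simp add: b_def)
    ultimately have "g A \<in> b" if "A \<in> b" for A
      using that unfolding b_def by blast
    then show "g ` b \<subseteq> b" by blast
  qed
  moreover have "pstab subset_auts b \<noteq> pstab subset_auts a"
  proof -
    let ?\<tau> = "Transposition.transpose (0::nat) 1"
    have "image ?\<tau> \<in> subset_auts"
      using bij_transpose[of 0 1] subset_auts_iff[of "image ?\<tau>"] by blast
    moreover have "?\<tau> ` {0, 1} = {0, 1}" "?\<tau> ` {0} \<noteq> {0}" by auto
    ultimately have "image ?\<tau> \<in> pstab subset_auts a" "image ?\<tau> \<notin> pstab subset_auts b"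
      by (simp_all add: pstab_def a_def b_def)
    then show ?thesis by blast
  qed
  ultimately have "\<not> stab_simple_pair subset_auts a b"
    unfolding stab_simple_pair_def by blast
  moreover have "a \<in> {a. finite a}" "b \<in> {a. finite a}"
    by (simp_all add: a_def b_def)
  ultimately show ?thesis using \<open>a \<subseteq> b\<close> unfolding simple_dyn_def by blast
qed

section \<open>Permutations of infinite sets of naturals\<close>

lemma bij_fixing_imp_permutes: "bij p \<Longrightarrow> (\<And>x. x \<notin> S \<Longrightarrow> p x = x) \<Longrightarrow> p permutes S"
  by (simp add: bij_iff permutes_def)

lemma infinite_nat_sets_bij_betw:
  fixes A B :: "nat set"
  assumes "infinite A" "infinite B"
  obtains h where "bij_betw h A B"
proof
  show "bij_betw (enumerate B \<circ> inv_into UNIV (enumerate A)) A B"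
    using bij_enumerate[OF assms(1)] bij_enumerate[OF assms(2)]
    by (meson bij_betw_inv_into bij_betw_trans)
qed

lemma permutes_mapping_onto:
  fixes P R T :: "nat set"
  assumes "R \<subseteq> P" "T \<subseteq> P" "infinite R" "infinite (P - R)" "infinite T" "infinite (P - T)"
  obtains \<rho> where "\<rho> permutes P" "\<rho> ` R = T"
proof -
  obtain h1 where h1: "bij_betw h1 R T"
    by (rule infinite_nat_sets_bij_betw[OF assms(3,5)])
  obtain h2 where h2: "bij_betw h2 (P - R) (P - T)"
    by (rule infinite_nat_sets_bij_betw[OF assms(4,6)])
  define \<rho> where "\<rho> x = (if x \<in> R then h1 x else if x \<in> P then h2 x else x)" for x
  have "bij_betw \<rho> R T" using h1 by (rule bij_betw_cong[THEN iffD1, rotated]) (simp add: \<rho>_def)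
  moreover have "bij_betw \<rho> (P - R) (P - T)"
    using h2 by (rule bij_betw_cong[THEN iffD1, rotated]) (simp add: \<rho>_def)
  ultimately have "bij_betw \<rho> (R \<union> (P - R)) (T \<union> (P - T))"
    by (rule bij_betw_combine) blast
  moreover have "R \<union> (P - R) = P" "T \<union> (P - T) = P" using assms(1,2) by blast+
  ultimately have "bij_betw \<rho> P P" by simp
  moreover have "\<rho> x = x" if "x \<notin> P" for x using that assms(1) by (auto simp: \<rho>_def)
  ultimately have "\<rho> permutes P" by (rule bij_imp_permutes)
  moreover have "\<rho> ` R = T" using \<open>bij_betw \<rho> R T\<close> by (simp add: bij_betw_def)
  ultimately show ?thesis by (rule that)
qed

text \<open>Conjugate by a permutation of \<open>P\<close> that maps an infinite, coinfinite \<open>R \<subseteq> Q\<close> onto an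
  infinite, coinfinite superset of \<open>T\<close>.\<close>
lemma permutes_conjugate_into:
  fixes P Q T :: "nat set"
  assumes "infinite Q" "Q \<subseteq> P" "\<pi> permutes T" "T \<subseteq> P" "infinite (P - T)"
  obtains \<rho> \<tau> where "\<rho> permutes P" "\<tau> permutes Q" "\<pi> = \<rho> \<circ> \<tau> \<circ> inv \<rho>"
proof -
  obtain R R' where R: "R \<subseteq> Q" "R' \<subseteq> Q" "infinite R" "infinite R'" "R \<inter> R' = {}"
    by (rule infinite_split[OF assms(1)])
  obtain A A' where A: "A \<subseteq> P - T" "A' \<subseteq> P - T" "infinite A" "infinite A'" "A \<inter> A' = {}"
    by (rule infinite_split[OF assms(5)])
  have "R' \<subseteq> P - R" using R assms(2) by blast
  then have "infinite (P - R)" using R(4) finite_subset by blast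
  have "A' \<subseteq> P - (T \<union> A)" using A by blast
  then have "infinite (P - (T \<union> A))" using A(4) finite_subset by blast
  moreover have "R \<subseteq> P" "T \<union> A \<subseteq> P" "infinite (T \<union> A)" using R A assms(2,4) by auto
  ultimately obtain \<rho> where \<rho>: "\<rho> permutes P" "\<rho> ` R = T \<union> A"
    using permutes_mapping_onto[of R P "T \<union> A"] R(3) \<open>infinite (P - R)\<close> by blast
  define \<tau> where "\<tau> = inv \<rho> \<circ> \<pi> \<circ> \<rho>"
  have "\<tau> x = x" if "x \<notin> R" for x
  proof -
    have "\<rho> x \<notin> \<rho> ` R" using that permutes_inj[OF \<rho>(1)] by (simp add: inj_image_mem_iff)
    then have "\<pi> (\<rho> x) = \<rho> x" using \<rho>(2) assms(3) by (simp add: permutes_not_in)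
    then show ?thesis using permutes_inverses(2)[OF \<rho>(1)] by (simp add: \<tau>_def)
  qed
  moreover have "bij \<tau>"
    unfolding \<tau>_def using \<rho>(1) assms(3)
    by (intro bij_comp permutes_bij permutes_inv)
  ultimately have "\<tau> permutes Q"
    using R(1) by (intro bij_fixing_imp_permutes) auto
  moreover have "\<pi> = \<rho> \<circ> \<tau> \<circ> inv \<rho>"
    using permutes_inverses[OF \<rho>(1)] by (simp add: \<tau>_def fun_eq_iff)
  ultimately show ?thesis using \<rho>(1) by (rule that[rotated])
qed

text \<open>Greedy choice: each new point exceeds all earlier points and their images under \<open>s\<close>
  and \<open>inv s\<close>.\<close>
lemma infinite_subset_disjoint_from_image:
  fixes s :: "nat \<Rightarrow> nat"
  assumes E: "infinite E" and "bij s" and no_fixed: "\<forall>x\<in>E. s x \<noteq> x"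
  obtains D where "D \<subseteq> E" "infinite D" "D \<inter> s ` D = {}"
proof -
  define next_in_E where "next_in_E m = (LEAST x. x \<in> E \<and> m \<le> x)" for m
  have next_in_E: "next_in_E m \<in> E \<and> m \<le> next_in_E m" for m
    unfolding next_in_E_def
    by (rule LeastI_ex) (use E in \<open>auto simp: infinite_nat_iff_unbounded_le\<close>)
  define step where
    "step m = Suc (max (next_in_E m) (max (s (next_in_E m)) (inv s (next_in_E m))))" for m
  define t where "t n = (step ^^ n) 0" for n
  define d where "d n = next_in_E (t n)" for n
  have "t n < t (Suc n)" for n
    using next_in_E[of "t n"] by (simp add: t_def step_def less_Suc_eq_le le_max_iff_disj)
  then have "strict_mono t" by (simp add: strict_mono_Suc_iff)
  have above: "d n < d m \<and> s (d n) < d m \<and> inv s (d n) < d m" if "n < m" for n m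
  proof -
    have "t (Suc n) \<le> t m" using \<open>strict_mono t\<close> that by (simp add: strict_mono_less_eq)
    then show ?thesis
      using next_in_E[of "t m"] by (simp add: t_def d_def step_def Suc_le_eq max_less_iff_conj)
  qed
  have "d m \<noteq> s (d n)" for m n
  proof (cases n m rule: linorder_cases)
    case less
    then show ?thesis using above by fastforce
  next
    case equal
    then show ?thesis using no_fixed next_in_E by (metis d_def)
  next
    case greater
    show ?thesis
    proof
      assume "d m = s (d n)"
      then have "inv s (d m) = d n" using \<open>bij s\<close> by (simp add: bij_is_inj)
      then show False using above[OF greater] by simp
    qed
  qed
  then have "range d \<inter> s ` range d = {}" by auto
  moreover have "strict_mono d" using above by (simp add: strict_mono_def)
  then have "infinite (range d)" by (simp add: strict_mono_imp_inj_on range_inj_infinite)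
  moreover have "range d \<subseteq> E" using next_in_E by (auto simp: d_def)
  ultimately show ?thesis using that by blast
qed

lemma permutes_undoing_on:
  assumes "bij \<sigma>" and disjoint: "D \<inter> \<sigma> ` D = {}"
  obtains \<beta> where "\<beta> permutes D \<union> \<sigma> ` D" "\<And>x. x \<in> D \<Longrightarrow> \<beta> (\<sigma> x) = x"
proof
  define \<beta> where "\<beta> x = (if x \<in> D then \<sigma> x else if x \<in> \<sigma> ` D then inv \<sigma> x else x)" for x
  have inv_\<sigma>: "inv \<sigma> (\<sigma> x) = x" "\<sigma> (inv \<sigma> x) = x" for x
    using \<open>bij \<sigma>\<close> by (simp_all add: bij_is_inj bij_is_surj surj_f_inv_f)
  show undo: "\<beta> (\<sigma> x) = x" if "x \<in> D" for x
    using that disjoint inv_\<sigma> by (auto simp: \<beta>_def)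
  have "\<beta> (\<beta> x) = x" for x
  proof (cases "x \<in> D")
    case True
    then show ?thesis using undo by (simp add: \<beta>_def)
  next
    case False
    then show ?thesis
    proof (cases "x \<in> \<sigma> ` D")
      case True
      then obtain y where "y \<in> D" "x = \<sigma> y" by blast
      then show ?thesis using False inv_\<sigma> by (simp add: \<beta>_def)
    qed (simp add: \<beta>_def False)
  qed
  then have "bij \<beta>" by (rule involuntory_imp_bij)
  then show "\<beta> permutes D \<union> \<sigma> ` D"
    by (rule bij_fixing_imp_permutes) (simp add: \<beta>_def)
qed

text \<open>If \<open>\<sigma>\<close> fixes only finitely many points of \<open>P\<close>, choose an infinite \<open>D\<close> disjoint from
  \<open>\<sigma> ` D\<close>, still leaving infinitely many points of \<open>P\<close> outside \<open>D \<union> \<sigma> ` D\<close>, and write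
  \<open>\<sigma> = inv \<beta> \<circ> (\<beta> \<circ> \<sigma>)\<close> with \<open>\<beta>\<close> undoing \<open>\<sigma>\<close> on \<open>D\<close>.\<close>
lemma permutes_product_of_infinitely_fixing:
  fixes P :: "nat set"
  assumes \<sigma>: "\<sigma> permutes P" and "infinite P"
  obtains \<beta> \<gamma> T U where "\<beta> permutes T" "T \<subseteq> P" "infinite (P - T)"
    "\<gamma> permutes U" "U \<subseteq> P" "infinite (P - U)" "\<sigma> = \<beta> \<circ> \<gamma>"
proof (cases "finite {x \<in> P. \<sigma> x = x}")
  case False
  have "\<sigma> permutes {x \<in> P. \<sigma> x \<noteq> x}"
    using permutes_bij[OF \<sigma>] permutes_not_in[OF \<sigma>] by (intro bij_fixing_imp_permutes) auto
  moreover have "P - {x \<in> P. \<sigma> x \<noteq> x} = {x \<in> P. \<sigma> x = x}" by blast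
  ultimately show ?thesis
    using that[of \<sigma> _ id "{}"] False \<open>infinite P\<close> by simp
next
  case True
  let ?M = "{x \<in> P. \<sigma> x \<noteq> x}"
  have "?M = P - {x \<in> P. \<sigma> x = x}" by blast
  then have "infinite ?M" using True \<open>infinite P\<close> by simp
  then obtain D' where D': "D' \<subseteq> ?M" "infinite D'" "D' \<inter> \<sigma> ` D' = {}"
    using permutes_bij[OF \<sigma>] by (rule infinite_subset_disjoint_from_image) auto
  obtain D D2 where D: "D \<subseteq> D'" "D2 \<subseteq> D'" "infinite D" "infinite D2" "D \<inter> D2 = {}"
    by (rule infinite_split[OF D'(2)])
  have "D \<inter> \<sigma> ` D = {}" using D'(3) D(1) by blast
  then obtain \<beta> where \<beta>: "\<beta> permutes D \<union> \<sigma> ` D" "\<And>x. x \<in> D \<Longrightarrow> \<beta> (\<sigma> x) = x"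
    using permutes_bij[OF \<sigma>] permutes_undoing_on by metis
  have "D \<subseteq> P" using D D' by blast
  then have "D \<union> \<sigma> ` D \<subseteq> P" using permutes_in_image[OF \<sigma>] by blast
  have "D2 \<subseteq> P - (D \<union> \<sigma> ` D)" using D D' by blast
  then have "infinite (P - (D \<union> \<sigma> ` D))" using D(4) finite_subset by blast
  have "\<beta> \<circ> \<sigma> permutes P - D"
  proof (rule bij_fixing_imp_permutes)
    show "bij (\<beta> \<circ> \<sigma>)" using \<beta>(1) \<sigma> by (intro bij_comp permutes_bij)
    fix x assume "x \<notin> P - D"
    then consider "x \<in> D" | "x \<notin> P" by blast
    then show "(\<beta> \<circ> \<sigma>) x = x"
    proof cases
      case 2
      then have "x \<notin> D \<union> \<sigma> ` D" using \<open>D \<union> \<sigma> ` D \<subseteq> P\<close> by blast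
      then show ?thesis using 2 permutes_not_in[OF \<sigma>] permutes_not_in[OF \<beta>(1)] by simp
    qed (simp add: \<beta>(2))
  qed
  moreover have "infinite (P - (P - D))" using \<open>D \<subseteq> P\<close> D(3) by (simp add: double_diff)
  moreover have "\<sigma> = inv \<beta> \<circ> (\<beta> \<circ> \<sigma>)"
    using permutes_inv_o(2)[OF \<beta>(1)] by (simp add: o_assoc)
  ultimately show ?thesis
    using that[of "inv \<beta>" "D \<union> \<sigma> ` D" "\<beta> \<circ> \<sigma>" "P - D"] permutes_inv[OF \<beta>(1)]
      \<open>D \<union> \<sigma> ` D \<subseteq> P\<close> \<open>infinite (P - (D \<union> \<sigma> ` D))\<close>
    by blast
qed

text \<open>In group terms: the normal subgroup of \<open>Sym(P)\<close> generated by \<open>Sym(Q)\<close> is all of \<open>Sym(P)\<close>.\<close>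
lemma permutes_in_conjugation_closed:
  fixes P Q :: "nat set"
  assumes "infinite Q" "Q \<subseteq> P"
    and comp: "\<And>\<tau> \<tau>'. \<tau> \<in> W \<Longrightarrow> \<tau>' \<in> W \<Longrightarrow> \<tau> \<circ> \<tau>' \<in> W"
    and conj: "\<And>\<rho> \<tau>. \<rho> permutes P \<Longrightarrow> \<tau> \<in> W \<Longrightarrow> \<rho> \<circ> \<tau> \<circ> inv \<rho> \<in> W"
    and base: "\<And>\<tau>. \<tau> permutes Q \<Longrightarrow> \<tau> \<in> W"
    and "\<sigma> permutes P"
  shows "\<sigma> \<in> W"
proof -
  have fixing: "\<pi> \<in> W" if \<pi>: "\<pi> permutes T" "T \<subseteq> P" "infinite (P - T)" for \<pi> T
  proof -
    obtain \<rho> \<tau> where "\<rho> permutes P" "\<tau> permutes Q" "\<pi> = \<rho> \<circ> \<tau> \<circ> inv \<rho>"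
      by (rule permutes_conjugate_into[OF assms(1,2) \<pi>])
    then show ?thesis using conj base by blast
  qed
  have "infinite P" using assms(1,2) finite_subset by blast
  then obtain \<beta> \<gamma> T U where "\<beta> permutes T" "T \<subseteq> P" "infinite (P - T)"
    "\<gamma> permutes U" "U \<subseteq> P" "infinite (P - U)" "\<sigma> = \<beta> \<circ> \<gamma>"
    by (rule permutes_product_of_infinitely_fixing[OF \<open>\<sigma> permutes P\<close>])
  then show ?thesis using fixing comp by metis
qed

lemma permutes_within_fibre:
  assumes "\<tau> permutes Q" "Q \<subseteq> {x. g x = t}"
  shows "g (\<tau> x) = g x"
proof (cases "x \<in> Q")
  case True
  then show ?thesis using assms permutes_in_image[OF assms(1)] by blast
qed (simp add: permutes_not_in[OF assms(1)])

lemma permutes_restrict_to_fibres: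
  assumes "bij \<sigma>" and preserves: "\<And>x. g (\<sigma> x) = g x"
  shows "(\<lambda>x. if g x \<in> K then \<sigma> x else x) permutes {x. g x \<in> K}"
proof (rule bij_fixing_imp_permutes)
  have preserves_inv: "g (inv \<sigma> x) = g x" for x
    using preserves[of "inv \<sigma> x"] surj_f_inv_f[OF bij_is_surj[OF \<open>bij \<sigma>\<close>]] by simp
  show "bij (\<lambda>x. if g x \<in> K then \<sigma> x else x)"
  proof (rule o_bij[where g = "\<lambda>x. if g x \<in> K then inv \<sigma> x else x"])
    show "(\<lambda>x. if g x \<in> K then inv \<sigma> x else x) \<circ> (\<lambda>x. if g x \<in> K then \<sigma> x else x) = id"
      using preserves inv_f_f[OF bij_is_inj[OF \<open>bij \<sigma>\<close>]] by (simp add: fun_eq_iff)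
    show "(\<lambda>x. if g x \<in> K then \<sigma> x else x) \<circ> (\<lambda>x. if g x \<in> K then inv \<sigma> x else x) = id"
      using preserves_inv surj_f_inv_f[OF bij_is_surj[OF \<open>bij \<sigma>\<close>]] by (simp add: fun_eq_iff)
  qed
qed simp

lemma fibre_preserving_permutes_in_closed:
  assumes "finite S"
    and "id \<in> W" and comp: "\<And>f h. f \<in> W \<Longrightarrow> h \<in> W \<Longrightarrow> f \<circ> h \<in> W"
    and fibre: "\<And>s \<tau>. \<tau> permutes {x. g x = s} \<Longrightarrow> \<tau> \<in> W"
  shows "\<sigma> permutes {x. g x \<in> S} \<Longrightarrow> (\<And>x. g (\<sigma> x) = g x) \<Longrightarrow> \<sigma> \<in> W"
  using \<open>finite S\<close>
proof (induction S arbitrary: \<sigma> rule: finite_induct)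
  case empty
  then show ?case using \<open>id \<in> W\<close> by (simp add: id_def)
next
  case (insert s S)
  define \<sigma>\<^sub>s where "\<sigma>\<^sub>s x = (if g x \<in> {s} then \<sigma> x else x)" for x
  define \<sigma>\<^sub>S where "\<sigma>\<^sub>S x = (if g x \<in> S then \<sigma> x else x)" for x
  have bij: "bij \<sigma>" using permutes_bij[OF insert.prems(1)] .
  have "\<sigma>\<^sub>s permutes {x. g x \<in> {s}}"
    unfolding \<sigma>\<^sub>s_def using bij insert.prems(2) by (rule permutes_restrict_to_fibres)
  then have "\<sigma>\<^sub>s \<in> W" using fibre by simp
  moreover have "\<sigma>\<^sub>S permutes {x. g x \<in> S}"
    unfolding \<sigma>\<^sub>S_def using bij insert.prems(2) by (rule permutes_restrict_to_fibres)
  then have "\<sigma>\<^sub>S \<in> W"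
    by (rule insert.IH) (simp add: \<sigma>\<^sub>S_def insert.prems(2))
  moreover have "\<sigma> = \<sigma>\<^sub>s \<circ> \<sigma>\<^sub>S"
  proof
    fix x
    show "\<sigma> x = (\<sigma>\<^sub>s \<circ> \<sigma>\<^sub>S) x"
      using insert.hyps(2) insert.prems permutes_not_in[OF insert.prems(1), of x]
      by (auto simp: \<sigma>\<^sub>s_def \<sigma>\<^sub>S_def)
  qed
  ultimately show ?case using comp by metis
qed

lemma image_permutes_in_pstab_subset_auts:
  assumes "\<tau> permutes Q" "Q \<subseteq> {x. sets_containing a x = s}"
  shows "image \<tau> \<in> pstab subset_auts a"
  using image_in_pstab_subset_auts_iff[OF permutes_bij[OF assms(1)]]
    permutes_within_fibre[OF assms] by blast

section \<open>The finite ideal is almost simple\<close>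

text \<open>\<open>atom a x\<close> is the atom containing \<open>x\<close> of the Boolean algebra generated by \<open>a\<close>.\<close>
definition atom :: "'a set set \<Rightarrow> 'a \<Rightarrow> 'a set" where
  "atom a x = {y. sets_containing a y = sets_containing a x}"

lemma finite_range_atom: "finite a \<Longrightarrow> finite (range (atom a))"
proof -
  assume "finite a"
  have "range (sets_containing a) \<subseteq> Pow a" by (auto simp: sets_containing_def)
  then have "finite (range (sets_containing a))" by (rule finite_subset) (simp add: \<open>finite a\<close>)
  moreover have "atom a = (\<lambda>s. {y. sets_containing a y = s}) \<circ> sets_containing a"
    by (simp add: fun_eq_iff atom_def)
  ultimately show ?thesis by (metis finite_imageI image_comp)
qed

lemma finite_points_in_finite_atoms: "finite c \<Longrightarrow> finite {x. finite (atom c x)}"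
proof -
  assume "finite c"
  let ?F = "{x. finite (atom c x)}"
  have "finite (atom c ` ?F)"
    by (rule finite_subset[OF image_mono[OF subset_UNIV] finite_range_atom[OF \<open>finite c\<close>]])
  then have "finite (\<Union> (atom c ` ?F))" by (rule finite_Union) blast
  moreover have "?F \<subseteq> \<Union> (atom c ` ?F)"
  proof
    fix x assume "x \<in> ?F"
    moreover have "x \<in> atom c x" by (simp add: atom_def)
    ultimately show "x \<in> \<Union> (atom c ` ?F)" by blast
  qed
  ultimately show ?thesis by (rule finite_subset[rotated])
qed

lemma sets_containing_Un_singletons:
  "sets_containing (c \<union> (\<lambda>x. {x}) ` F) y = sets_containing c y \<union> (if y \<in> F then {{y}} else {})"
  unfolding sets_containing_def by auto

lemma exists_refinement_with_singleton_or_infinite_atoms: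
  fixes c :: "'a set set"
  assumes "finite c"
  obtains a where "finite a" "c \<subseteq> a" "\<And>x. finite (atom a x) \<Longrightarrow> atom a x = {x}"
proof
  define F where "F = {x. finite (atom c x)}"
  define a where "a = c \<union> (\<lambda>x. {x}) ` F"
  show "finite a" using assms finite_points_in_finite_atoms[OF assms] by (simp add: a_def F_def)
  show "c \<subseteq> a" by (simp add: a_def)
  fix x assume "finite (atom a x)"
  show "atom a x = {x}"
  proof (cases "x \<in> F")
    case True
    have "y = x" if "y \<in> atom a x" for y
    proof -
      have "{x} \<in> sets_containing a y"
        using that True by (simp add: atom_def a_def sets_containing_Un_singletons)
      then show ?thesis by (simp add: sets_containing_def)
    qed
    then show ?thesis by (auto simp: atom_def)
  next
    case False
    have "atom c x \<subseteq> atom a x"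
    proof
      fix y assume "y \<in> atom c x"
      then have "atom c y = atom c x" by (simp add: atom_def)
      then have "y \<notin> F" using False by (simp add: F_def)
      then show "y \<in> atom a x"
        using \<open>y \<in> atom c x\<close> False by (simp add: atom_def a_def sets_containing_Un_singletons)
    qed
    then show ?thesis
      using False \<open>finite (atom a x)\<close> finite_subset[of "atom c x" "atom a x"] by (simp add: F_def)
  qed
qed

lemma permutes_finite_fibre_eq_id:
  assumes atoms: "\<And>x. finite (atom a x) \<Longrightarrow> atom a x = {x}"
    and "finite {x. sets_containing a x = s}" and \<tau>: "\<tau> permutes {x. sets_containing a x = s}"
  shows "\<tau> = id"
proof (cases "\<exists>x. sets_containing a x = s")
  case True
  then obtain x where "sets_containing a x = s" by blast
  then have "{x. sets_containing a x = s} = {x}"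
    using atoms[of x] assms(2) by (simp add: atom_def)
  then show ?thesis using \<tau> by simp
qed (use \<tau> in simp)

lemma infinite_set_meets_infinite_fibre:
  assumes "finite b" "infinite P"
  obtains y where "infinite (P \<inter> {x. sets_containing b x = sets_containing b y})"
proof -
  have "sets_containing b ` P \<subseteq> Pow b" by (rule image_subsetI) (simp add: sets_containing_subset)
  then have "finite (sets_containing b ` P)" by (rule finite_subset) (simp add: assms(1))
  then obtain y where "infinite {x \<in> P. sets_containing b x = sets_containing b y}"
    using pigeonhole_infinite[OF assms(2)] by blast
  moreover have "{x \<in> P. sets_containing b x = sets_containing b y} =
      P \<inter> {x. sets_containing b x = sets_containing b y}" by blast
  ultimately show ?thesis using that by simp
qed

lemma image_permutes_fibre_in_normal_subgroup:
  fixes a b :: "nat set set"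
  assumes "finite b" and atoms: "\<And>x. finite (atom a x) \<Longrightarrow> atom a x = {x}"
    and normal: "N \<lhd> perm_group (pstab subset_auts a)" and "pstab subset_auts b \<subseteq> N"
    and \<tau>: "\<tau> permutes {x. sets_containing a x = s}"
  shows "image \<tau> \<in> N"
proof -
  have "id \<in> N"
    and N_comp: "\<And>f g. f \<in> N \<Longrightarrow> g \<in> N \<Longrightarrow> f \<circ> g \<in> N"
    and N_conj: "\<And>g f. g \<in> pstab subset_auts a \<Longrightarrow> f \<in> N \<Longrightarrow> g \<circ> f \<circ> inv g \<in> N"
    using normal
    unfolding normal_perm_group_iff[OF group_of_bijections_pstab[OF group_of_bijections_subset_auts]]
    by blast+
  show ?thesis
  proof (cases "finite {x. sets_containing a x = s}")
    case True
    then have "\<tau> = id" using permutes_finite_fibre_eq_id[OF atoms _ \<tau>] by blast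
    then show ?thesis using \<open>id \<in> N\<close> by (simp add: image_id)
  next
    case False
    define P where "P = {x. sets_containing a x = s}"
    obtain y where Q: "infinite (P \<inter> {x. sets_containing b x = sets_containing b y})"
      using infinite_set_meets_infinite_fibre[OF \<open>finite b\<close>] False unfolding P_def by blast
    have "\<tau> \<in> {\<tau>. image \<tau> \<in> N}"
    proof (rule permutes_in_conjugation_closed[OF Q])
      fix \<tau>\<^sub>1 \<tau>\<^sub>2 assume "\<tau>\<^sub>1 \<in> {\<tau>. image \<tau> \<in> N}" "\<tau>\<^sub>2 \<in> {\<tau>. image \<tau> \<in> N}"
      then show "\<tau>\<^sub>1 \<circ> \<tau>\<^sub>2 \<in> {\<tau>. image \<tau> \<in> N}" using N_comp by (simp add: image_comp_fun)
    next
      fix \<rho> \<tau>' assume \<rho>: "\<rho> permutes P" and "\<tau>' \<in> {\<tau>. image \<tau> \<in> N}"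
      have "image \<rho> \<in> pstab subset_auts a"
        using \<rho> by (rule image_permutes_in_pstab_subset_auts[where s = s]) (simp add: P_def)
      then have "image \<rho> \<circ> image \<tau>' \<circ> inv (image \<rho>) \<in> N"
        using N_conj \<open>\<tau>' \<in> {\<tau>. image \<tau> \<in> N}\<close> by simp
      then show "\<rho> \<circ> \<tau>' \<circ> inv \<rho> \<in> {\<tau>. image \<tau> \<in> N}"
        using image_inv_eq_inv_image[OF permutes_bij[OF \<rho>]] by (simp add: image_comp_fun)
    next
      fix \<tau>' assume "\<tau>' permutes P \<inter> {x. sets_containing b x = sets_containing b y}"
      then have "image \<tau>' \<in> pstab subset_auts b"
        by (rule image_permutes_in_pstab_subset_auts[OF _ Int_lower2])
      then show "\<tau>' \<in> {\<tau>. image \<tau> \<in> N}" using \<open>pstab subset_auts b \<subseteq> N\<close> by auto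
    qed (use \<tau> in \<open>simp_all add: P_def\<close>)
    then show ?thesis by simp
  qed
qed

lemma stab_simple_pair_subset_auts:
  fixes a b :: "nat set set"
  assumes "finite b" "a \<subseteq> b"
    and atoms: "\<And>x. finite (atom a x) \<Longrightarrow> atom a x = {x}"
  shows "stab_simple_pair subset_auts a b"
  unfolding stab_simple_pair_def
proof (intro allI impI, elim conjE)
  fix N assume normal: "N \<lhd> perm_group (pstab subset_auts a)"
    and "pstab subset_auts b \<subseteq> N"
  have "N \<subseteq> pstab subset_auts a" and "id \<in> N"
    and N_comp: "\<And>f g. f \<in> N \<Longrightarrow> g \<in> N \<Longrightarrow> f \<circ> g \<in> N"
    using normal
    unfolding normal_perm_group_iff[OF group_of_bijections_pstab[OF group_of_bijections_subset_auts]]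
    by blast+
  have "f \<in> N" if "f \<in> pstab subset_auts a" for f
  proof -
    obtain \<sigma> where "f = image \<sigma>" "bij \<sigma>"
      and preserves: "\<And>x. sets_containing a (\<sigma> x) = sets_containing a x"
      using \<open>f \<in> pstab subset_auts a\<close> unfolding pstab_subset_auts_eq by blast
    have "finite (Pow a)" using \<open>finite b\<close> \<open>a \<subseteq> b\<close> by (simp add: finite_subset)
    have "\<sigma> permutes {x. sets_containing a x \<in> Pow a}"
      using \<open>bij \<sigma>\<close> by (rule bij_fixing_imp_permutes) (simp add: sets_containing_subset)
    have "\<sigma> \<in> {\<tau>. image \<tau> \<in> N}"
    proof (rule fibre_preserving_permutes_in_closed[where g = "sets_containing a"])
      show "\<tau>\<^sub>1 \<circ> \<tau>\<^sub>2 \<in> {\<tau>. image \<tau> \<in> N}"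
        if "\<tau>\<^sub>1 \<in> {\<tau>. image \<tau> \<in> N}" "\<tau>\<^sub>2 \<in> {\<tau>. image \<tau> \<in> N}" for \<tau>\<^sub>1 \<tau>\<^sub>2
        using that N_comp by (simp add: image_comp_fun)
      show "\<tau> \<in> {\<tau>. image \<tau> \<in> N}" if "\<tau> permutes {x. sets_containing a x = s}" for \<tau> s
        using image_permutes_fibre_in_normal_subgroup[OF \<open>finite b\<close> atoms normal
            \<open>pstab subset_auts b \<subseteq> N\<close> that] by simp
      show "id \<in> {\<tau>. image \<tau> \<in> N}" using \<open>id \<in> N\<close> by (simp add: image_id)
    qed (fact | rule preserves)+
    then show "f \<in> N" using \<open>f = image \<sigma>\<close> by simp
  qed
  then show "N = pstab subset_auts a" using \<open>N \<subseteq> pstab subset_auts a\<close> by blast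
qed

lemma almost_simple_dyn_finite_sets: "almost_simple_dyn subset_auts {a :: nat set set. finite a}"
  unfolding almost_simple_dyn_def
proof
  fix c :: "nat set set" assume "c \<in> {a. finite a}"
  then have "finite c" by simp
  then obtain a where "finite a" "c \<subseteq> a" and atoms: "\<And>x. finite (atom a x) \<Longrightarrow> atom a x = {x}"
    using exists_refinement_with_singleton_or_infinite_atoms by metis
  have "stab_simple_pair subset_auts a b" if "b \<in> {a. finite a}" "a \<subseteq> b" for b
    using that stab_simple_pair_subset_auts[OF _ _ atoms] by simp
  then show "\<exists>a\<in>{a. finite a}. c \<subseteq> a \<and> (\<forall>b\<in>{a. finite a}. a \<subseteq> b \<longrightarrow> stab_simple_pair subset_auts a b)"
    using \<open>finite a\<close> \<open>c \<subseteq> a\<close> by blast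
qed

lemma dynamical_ideal_finite_sets: "dynamical_ideal \<Gamma> {a. finite a}"
  unfolding dynamical_ideal_def
proof (intro conjI ballI allI impI)
  fix a b :: "'a set" assume "a \<in> {a. finite a}" "b \<subseteq> a"
  then show "b \<in> {a. finite a}" using finite_subset[of b a] by simp
qed simp_all

theorem mainTheorem17:
  shows "dynamical_ideal subset_auts {a :: nat set set. finite a}
       \<and> almost_simple_dyn subset_auts {a :: nat set set. finite a}
       \<and> \<not> simple_dyn subset_auts {a :: nat set set. finite a}"
  using dynamical_ideal_finite_sets almost_simple_dyn_finite_sets not_simple_dyn_finite_sets
  by (intro conjI)

end
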